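(* Let $b:\mathbb R\to\mathbb R$ be an arbitrary function (bottom topography), and let $x$ be a grid function with $x_s\neq0$ and $x_t+\check x_t\neq0$ at every node, satisfying at every node the modified scheme $$x_{t\check t}-\alpha^2x_{s\bar s}+\Big(\frac{1}{\hat x_s\check x_s}\Big)_{\bar s}-\frac{b_t+\check b_t}{x_t+\check x_t}=0,$$ where $b$ also denotes the grid function $b(x(t,s))$, so that $b_t+\check b_t=\big(b(\hat x)-b(\check x)\big)/\tau$. Then at every node the discrete energy conservation law $$\Big(x_t^2+x_s^{-1}+\hat x_s^{-1}+\alpha^2x_s\hat x_s-\hat b-b\Big)_{\check t}+\Big((x_t^++\check x_t^+)\big((\hat x_s\check x_s)^{-1}-\alpha^2x_s\big)\Big)_{\bar s}=0$$ holds.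
   Context: Fix mesh steps $\tau>0$, $h>0$ and a constant $\alpha\in\mathbb R$. A grid function is a real-valued function $f=f(t,s)$ on the uniform orthogonal mesh $\{(n\tau,kh): n,k\in\mathbb Z\}$. Shifts: $\hat f=f(t+\tau,s)$, $\check f=f(t-\tau,s)$, $f^+=f_+=f(t,s+h)$, $f^-=f_-=f(t,s-h)$; a shift applied to a composite expression shifts the whole expression (e.g. $\hat x_s$ is $x_s$ evaluated at $(t+\tau,s)$, $\check x_t$ is $x_t$ evaluated at $(t-\tau,s)$, $x_t^+$ is $x_t$ evaluated at $(t,s+h)$, $\check x_t^+$ is $x_t$ evaluated at $(t-\tau,s+h)$, $\hat b=b(\hat x)$). Differences: $f_t=(\hat f-f)/\tau$, $f_{\check t}=(f-\check f)/\tau$, $f_s=(f_+-f)/h$, $f_{\bar s}=(f-f_-)/h$; iterated differences compose, e.g. $x_{t\check t}=(x_t)_{\check t}=(\hat x-2x+\check x)/\tau^2$ and $x_{s\bar s}=(x_s)_{\bar s}=(x_+-2x+x_-)/h^2$. *)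

theory Defs
  imports Main Complex_Main
begin

text \<open>Grid functions on the mesh (n tau, k h), n,k integers, represented as
  functions of the integer indices (n,k).\<close>
type_synonym gridfun = "int \<Rightarrow> int \<Rightarrow> real"

definition dt :: "real \<Rightarrow> gridfun \<Rightarrow> gridfun" where
  "dt \<tau> f = (\<lambda>n k. (f (n+1) k - f n k) / \<tau>)"
definition dtb :: "real \<Rightarrow> gridfun \<Rightarrow> gridfun" where
  "dtb \<tau> f = (\<lambda>n k. (f n k - f (n-1) k) / \<tau>)"
definition ds :: "real \<Rightarrow> gridfun \<Rightarrow> gridfun" where
  "ds h f = (\<lambda>n k. (f n (k+1) - f n k) / h)"
definition dsb :: "real \<Rightarrow> gridfun \<Rightarrow> gridfun" where
  "dsb h f = (\<lambda>n k. (f n k - f n (k-1)) / h)"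

end

theory Submission
  imports Defs
begin

text \<open>Multiplying the scheme by x_t + x_t(t-tau) turns every term into a difference:
  (x_t + x_t(t-tau)) (x_t - x_t(t-tau)) is the time difference of x_t^2, the bottom term becomes
  b(x(t+tau)) - b(x(t-tau)), and the two s-differences are handled by summation by parts.
  For the latter, the forward s-shift of x_t + x_t(t-tau) exceeds it by
  h (x_s(t+tau) - x_s(t-tau)) / tau, and (p - q) / (p q) = 1/q - 1/p converts the resulting
  extra term into the time difference of x_s^-1 + x_s(t+tau)^-1. So the left-hand side of the
  conservation law is x_t + x_t(t-tau) times the residual of the scheme.\<close>

definition scheme_residual :: "real \<Rightarrow> real \<Rightarrow> real \<Rightarrow> (real \<Rightarrow> real) \<Rightarrow> gridfun \<Rightarrow> gridfun" where
  "scheme_residual \<tau> h \<alpha> b x = (\<lambda>n k. dtb \<tau> (dt \<tau> x) n k - \<alpha>\<^sup>2 * dsb h (ds h x) n k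
     + dsb h (\<lambda>n k. 1 / (ds h x (n+1) k * ds h x (n-1) k)) n k
     - (dt \<tau> (\<lambda>n k. b (x n k)) n k + dt \<tau> (\<lambda>n k. b (x n k)) (n-1) k)
       / (dt \<tau> x n k + dt \<tau> x (n-1) k))"

definition energy_density :: "real \<Rightarrow> real \<Rightarrow> real \<Rightarrow> (real \<Rightarrow> real) \<Rightarrow> gridfun \<Rightarrow> gridfun" where
  "energy_density \<tau> h \<alpha> b x = (\<lambda>n k. (dt \<tau> x n k)\<^sup>2 + 1 / ds h x n k + 1 / ds h x (n+1) k
     + \<alpha>\<^sup>2 * ds h x n k * ds h x (n+1) k - b (x (n+1) k) - b (x n k))"

definition energy_flux :: "real \<Rightarrow> real \<Rightarrow> real \<Rightarrow> gridfun \<Rightarrow> gridfun" where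
  "energy_flux \<tau> h \<alpha> x = (\<lambda>n k. (dt \<tau> x n (k+1) + dt \<tau> x (n-1) (k+1))
     * (1 / (ds h x (n+1) k * ds h x (n-1) k) - \<alpha>\<^sup>2 * ds h x n k))"

lemma dt_shift_s:
  assumes "h \<noteq> 0"
  shows "dt \<tau> x n (k+1) = dt \<tau> x n k + h / \<tau> * (ds h x (n+1) k - ds h x n k)"
  using assms by (cases "\<tau> = 0") (simp_all add: dt_def ds_def field_simps)

text \<open>The identity at a single node, with u, v, S, P, Q standing for x_t, x_t(t-tau), x_s,
  x_s(t+tau), x_s(t-tau), primes for the same quantities at s-h, A for the s-shift of u + v
  and Bp, B, Bm for b(x) at t+tau, t, t-tau.\<close>

lemma energy_balance_algebra:
  fixes u v S S' P Q P' Q' A Bp B Bm \<tau> h \<alpha> :: real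
  assumes "u + v \<noteq> 0" "\<tau> \<noteq> 0" "h \<noteq> 0" "P \<noteq> 0" "Q \<noteq> 0"
    and "A = (u + v) + h / \<tau> * (P - Q)"
  shows "((u\<^sup>2 + 1/S + 1/P + \<alpha>\<^sup>2*S*P - Bp - B) - (v\<^sup>2 + 1/Q + 1/S + \<alpha>\<^sup>2*Q*S - B - Bm)) / \<tau>
       + (A * (1/(P*Q) - \<alpha>\<^sup>2*S) - (u + v) * (1/(P'*Q') - \<alpha>\<^sup>2*S')) / h
     = (u + v) * ((u - v)/\<tau> - \<alpha>\<^sup>2 * ((S - S')/h) + (1/(P*Q) - 1/(P'*Q'))/h
                  - ((Bp - Bm)/\<tau>) / (u + v))"
proof -
  have "(P - Q) * (1/(P*Q) - \<alpha>\<^sup>2*S) = 1/Q - 1/P - \<alpha>\<^sup>2*S*(P - Q)"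
    using assms(4,5) by (simp add: field_simps)
  moreover have "A * G / h = (u + v) * G / h + (P - Q) * G / \<tau>" for G
    using assms(3,6) by (simp add: field_simps)
  ultimately have flux: "A * (1/(P*Q) - \<alpha>\<^sup>2*S) / h
      = (u + v) * (1/(P*Q) - \<alpha>\<^sup>2*S) / h + (1/Q - 1/P - \<alpha>\<^sup>2*S*(P - Q)) / \<tau>"
    by metis
  have bottom: "(u + v) * (X - Y / (u + v)) = (u + v) * X - Y" for X Y
    using assms(1) by (simp add: right_diff_distrib)
  show ?thesis
    unfolding diff_divide_distrib[of "A * _"] flux bottom
    using assms(2,3) by (simp add: field_simps power2_eq_square)
qed

lemma energy_balance_eq_times_scheme_residual:
  assumes "\<tau> \<noteq> 0" "h \<noteq> 0" "ds h x (n+1) k \<noteq> 0" "ds h x (n-1) k \<noteq> 0"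
    and "dt \<tau> x n k + dt \<tau> x (n-1) k \<noteq> 0"
  shows "dtb \<tau> (energy_density \<tau> h \<alpha> b x) n k + dsb h (energy_flux \<tau> h \<alpha> x) n k
       = (dt \<tau> x n k + dt \<tau> x (n-1) k) * scheme_residual \<tau> h \<alpha> b x n k"
proof -
  have shift: "dt \<tau> x n (k+1) + dt \<tau> x (n-1) (k+1)
      = (dt \<tau> x n k + dt \<tau> x (n-1) k) + h / \<tau> * (ds h x (n+1) k - ds h x (n-1) k)"
    using dt_shift_s[OF assms(2), of \<tau> x n k] dt_shift_s[OF assms(2), of \<tau> x "n-1" k]
    by (simp add: algebra_simps)
  have bottom: "dt \<tau> (\<lambda>n k. b (x n k)) n k + dt \<tau> (\<lambda>n k. b (x n k)) (n-1) k
      = (b (x (n+1) k) - b (x (n-1) k)) / \<tau>"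
    by (simp add: dt_def diff_divide_distrib)
  show ?thesis
    using energy_balance_algebra[OF assms(5,1,2,3,4) shift, of "ds h x n k" \<alpha>
        "b (x (n+1) k)" "b (x n k)" "b (x (n-1) k)" "ds h x (n+1) (k-1)" "ds h x (n-1) (k-1)"
        "ds h x n (k-1)"]
    unfolding energy_density_def energy_flux_def scheme_residual_def bottom
    by (simp add: dtb_def dsb_def dt_def[of \<tau> x])
qed

theorem mainTheorem9:
  fixes \<tau> h \<alpha> :: real and b :: "real \<Rightarrow> real" and x :: gridfun
  assumes "\<tau> > 0" and "h > 0"
    and "\<And>n k. ds h x n k \<noteq> 0"
    and "\<And>n k. dt \<tau> x n k + dt \<tau> x (n-1) k \<noteq> 0"
    and "\<And>n k. dtb \<tau> (dt \<tau> x) n k - \<alpha>^2 * dsb h (ds h x) n k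
              + dsb h (\<lambda>n k. 1 / (ds h x (n+1) k * ds h x (n-1) k)) n k
              - (dt \<tau> (\<lambda>n k. b (x n k)) n k + dt \<tau> (\<lambda>n k. b (x n k)) (n-1) k)
                / (dt \<tau> x n k + dt \<tau> x (n-1) k) = 0"
  shows "\<And>n k. dtb \<tau> (\<lambda>n k. (dt \<tau> x n k)^2 + 1 / ds h x n k + 1 / ds h x (n+1) k
                 + \<alpha>^2 * ds h x n k * ds h x (n+1) k - b (x (n+1) k) - b (x n k)) n k
         + dsb h (\<lambda>n k. (dt \<tau> x n (k+1) + dt \<tau> x (n-1) (k+1))
                 * (1 / (ds h x (n+1) k * ds h x (n-1) k) - \<alpha>^2 * ds h x n k)) n k = 0"
proof -
  fix n k
  have "scheme_residual \<tau> h \<alpha> b x n k = 0"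
    using assms(5) by (simp add: scheme_residual_def)
  moreover have "\<tau> \<noteq> 0" "h \<noteq> 0"
    using assms(1,2) by simp_all
  ultimately show "?thesis n k"
    using energy_balance_eq_times_scheme_residual[OF _ _ assms(3,3,4), of \<alpha> b]
    by (simp add: energy_density_def energy_flux_def)
qed

end
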